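(* Let $\mathbf v\in\mathbb R^{n\times m}_{<0}$, $\mathbf b\in\mathbb R^n_{<0}$, $\mathbf u\in\mathbb R^n_{<0}$, $\tau=(b_i/u_i)_i$, and $q_j=\min_{i\in[n]}|b_iv_{i,j}/u_i|$ for $j\in[m]$. Let $N(\mathbf v,\mathbf u,\mathbf b)$ be the network with source $s$, sink $t$, vertices $[n]\cup[m]$, edges $(s,i)$ of capacity $|b_i|$ for $i\in[n]$, edges $(i,j)$ of capacity $+\infty$ for each edge $(i,j)$ of $G_\tau(\mathbf v)$ (and no other agent–chore edges), and edges $(j,t)$ of capacity $q_j$ for $j\in[m]$. Then $\mathbf u$ is a competitive utility profile for $(\mathbf v,\mathbf b)$ if and only if (i) $\sum_i|b_i|=\sum_jq_j$ and (ii) a maximum $s$–$t$ flow in $N(\mathbf v,\mathbf u,\mathbf b)$ has value $\sum_i|b_i|$. Moreover, flows $\mathbf F$ of value $\sum_i|b_i|$ correspond to competitive allocations $\mathbf z$ with $\mathbf u(\mathbf z)=\mathbf u$ via $z_{i,j}=F_{i,j}/q_j$ (and conversely $F_{i,j}=q_jz_{i,j}$).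
   Context: Setup: agents $[n]$, chores $[m]$, allocations $\mathbf z\in\mathbb R^{n\times m}_{\ge0}$ with column sums $1$, $u_i(\mathbf z_i)=\sum_jv_{i,j}z_{i,j}$. Competitive allocation for budgets $\mathbf b$: there exist prices $\mathbf p\in\mathbb R^m_{<0}$ such that each $\mathbf z_i$ maximizes $u_i$ over bundles $\mathbf x\in\mathbb R^m_{\ge0}$ with $\sum_jp_jx_j\le b_i$; a competitive utility profile is $\mathbf u(\mathbf z)$ for such $\mathbf z$. For $\tau\in\mathbb R^n_{>0}$, $G_\tau(\mathbf v)$ is the bipartite graph with edge $(i,j)$ iff $\tau_i|v_{i,j}|\le\tau_{i'}|v_{i',j}|$ for all $i'$. *)

theory Defs
  imports Complex_Main "HOL-Library.Extended_Real"
begin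

text \<open>Agents are 0..<n, chores are 0..<m. Valuations v i j, budgets b i.
  Allocation z i j; bundles x :: nat => real (only coordinates j < m matter).\<close>

definition util :: "nat \<Rightarrow> (nat \<Rightarrow> nat \<Rightarrow> real) \<Rightarrow> nat \<Rightarrow> (nat \<Rightarrow> real) \<Rightarrow> real" where
  "util m v i x = (\<Sum>j<m. v i j * x j)"

definition is_allocation :: "nat \<Rightarrow> nat \<Rightarrow> (nat \<Rightarrow> nat \<Rightarrow> real) \<Rightarrow> bool" where
  "is_allocation n m z \<longleftrightarrow>
     (\<forall>i<n. \<forall>j<m. 0 \<le> z i j) \<and> (\<forall>j<m. (\<Sum>i<n. z i j) = 1)"

definition competitive_allocation ::
  "nat \<Rightarrow> nat \<Rightarrow> (nat \<Rightarrow> nat \<Rightarrow> real) \<Rightarrow> (nat \<Rightarrow> real) \<Rightarrow> (nat \<Rightarrow> nat \<Rightarrow> real) \<Rightarrow> bool" where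
  "competitive_allocation n m v b z \<longleftrightarrow>
     is_allocation n m z \<and>
     (\<exists>p :: nat \<Rightarrow> real. (\<forall>j<m. p j < 0) \<and>
        (\<forall>i<n. (\<Sum>j<m. p j * z i j) \<le> b i \<and>
               (\<forall>x :: nat \<Rightarrow> real. (\<forall>j<m. 0 \<le> x j) \<and> (\<Sum>j<m. p j * x j) \<le> b i
                   \<longrightarrow> util m v i x \<le> util m v i (z i))))"

definition competitive_profile ::
  "nat \<Rightarrow> nat \<Rightarrow> (nat \<Rightarrow> nat \<Rightarrow> real) \<Rightarrow> (nat \<Rightarrow> real) \<Rightarrow> (nat \<Rightarrow> real) \<Rightarrow> bool" where
  "competitive_profile n m v b u \<longleftrightarrow>
     (\<exists>z. competitive_allocation n m v b z \<and> (\<forall>i<n. u i = util m v i (z i)))"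

definition G_edge :: "nat \<Rightarrow> (nat \<Rightarrow> real) \<Rightarrow> (nat \<Rightarrow> nat \<Rightarrow> real) \<Rightarrow> nat \<Rightarrow> nat \<Rightarrow> bool" where
  "G_edge n \<tau> v i j \<longleftrightarrow> (\<forall>i'<n. \<tau> i * \<bar>v i j\<bar> \<le> \<tau> i' * \<bar>v i' j\<bar>)"

text \<open>A network: finite vertex set V, source s, sink t, capacities c (extended reals,
  +\<infinity> allowed; capacity 0 = no edge).\<close>

definition is_flow :: "'a set \<Rightarrow> 'a \<Rightarrow> 'a \<Rightarrow> ('a \<Rightarrow> 'a \<Rightarrow> ereal) \<Rightarrow> ('a \<Rightarrow> 'a \<Rightarrow> real) \<Rightarrow> bool" where
  "is_flow V s t c f \<longleftrightarrow>
     (\<forall>x\<in>V. \<forall>y\<in>V. 0 \<le> f x y \<and> ereal (f x y) \<le> c x y) \<and>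
     (\<forall>x\<in>V - {s, t}. (\<Sum>y\<in>V. f y x) = (\<Sum>y\<in>V. f x y))"

definition flow_value :: "'a set \<Rightarrow> 'a \<Rightarrow> ('a \<Rightarrow> 'a \<Rightarrow> real) \<Rightarrow> real" where
  "flow_value V s f = (\<Sum>y\<in>V. f s y) - (\<Sum>y\<in>V. f y s)"

definition is_max_flow_value :: "'a set \<Rightarrow> 'a \<Rightarrow> 'a \<Rightarrow> ('a \<Rightarrow> 'a \<Rightarrow> ereal) \<Rightarrow> real \<Rightarrow> bool" where
  "is_max_flow_value V s t c val \<longleftrightarrow>
     (\<exists>f. is_flow V s t c f \<and> flow_value V s f = val) \<and>
     (\<forall>f. is_flow V s t c f \<longrightarrow> flow_value V s f \<le> val)"

datatype node = Src | Snk | Agt nat | Chr nat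

definition tau :: "(nat \<Rightarrow> real) \<Rightarrow> (nat \<Rightarrow> real) \<Rightarrow> nat \<Rightarrow> real" where
  "tau b u i = b i / u i"

definition qcap :: "nat \<Rightarrow> (nat \<Rightarrow> nat \<Rightarrow> real) \<Rightarrow> (nat \<Rightarrow> real) \<Rightarrow> (nat \<Rightarrow> real) \<Rightarrow> nat \<Rightarrow> real" where
  "qcap n v u b j = Min ((\<lambda>i. \<bar>b i * v i j / u i\<bar>) ` {..<n})"

definition N_vertices :: "nat \<Rightarrow> nat \<Rightarrow> node set" where
  "N_vertices n m = {Src, Snk} \<union> Agt ` {..<n} \<union> Chr ` {..<m}"

fun N_cap :: "nat \<Rightarrow> nat \<Rightarrow> (nat \<Rightarrow> nat \<Rightarrow> real) \<Rightarrow> (nat \<Rightarrow> real) \<Rightarrow> (nat \<Rightarrow> real)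
              \<Rightarrow> node \<Rightarrow> node \<Rightarrow> ereal" where
  "N_cap n m v u b Src (Agt i) = (if i < n then ereal \<bar>b i\<bar> else 0)"
| "N_cap n m v u b (Agt i) (Chr j) =
     (if i < n \<and> j < m \<and> G_edge n (tau b u) v i j then \<infinity> else 0)"
| "N_cap n m v u b (Chr j) Snk = (if j < m then ereal (qcap n v u b j) else 0)"
| "N_cap n m v u b _ _ = 0"

end

theory Submission
  imports Defs
begin

text \<open>Put \<open>\<tau>\<^sub>i = b\<^sub>i / u\<^sub>i\<close>. If \<open>z\<close> is competitive at prices \<open>p\<close> with utilities \<open>u\<close>, each agent
  spends its whole budget (a scaled-down bundle would hurt less), and comparing with the bundle
  consisting of chore \<open>j\<close> alone gives \<open>|p\<^sub>j| \<le> \<tau>\<^sub>i |v\<^sub>i\<^sub>j|\<close>, with equality wherever \<open>z\<^sub>i\<^sub>j > 0\<close>.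
  Hence \<open>|p\<^sub>j| = q\<^sub>j\<close> and \<open>z\<close> lives on \<open>G\<^sub>\<tau>(v)\<close>. Conversely, an allocation spending exactly
  \<open>|b\<^sub>i|\<close> at prices \<open>-q\<close> along edges of \<open>G\<^sub>\<tau>(v)\<close> is competitive, since there every agent
  buys only chores of minimal pain per buck. Such allocations are exactly the flows
  \<open>F\<^sub>i\<^sub>j = q\<^sub>j z\<^sub>i\<^sub>j\<close> saturating every source and sink edge of \<open>N(v, u, b)\<close>.\<close>

definition demanded ::
  "nat \<Rightarrow> (nat \<Rightarrow> nat \<Rightarrow> real) \<Rightarrow> nat \<Rightarrow> (nat \<Rightarrow> real) \<Rightarrow> real \<Rightarrow> (nat \<Rightarrow> real) \<Rightarrow> bool" where
  "demanded m v i p \<beta> y \<longleftrightarrow> (\<Sum>j<m. p j * y j) \<le> \<beta> \<and>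
     (\<forall>x. (\<forall>j<m. 0 \<le> x j) \<and> (\<Sum>j<m. p j * x j) \<le> \<beta> \<longrightarrow> util m v i x \<le> util m v i y)"

lemma competitive_allocation_iff_demanded:
  "competitive_allocation n m v b z \<longleftrightarrow> is_allocation n m z \<and>
     (\<exists>p. (\<forall>j<m. p j < 0) \<and> (\<forall>i<n. demanded m v i p (b i) (z i)))"
  by (simp add: competitive_allocation_def demanded_def)

lemma demanded_spends_budget:
  assumes dem: "demanded m v i p \<beta> y" and "\<beta> < 0" and neg: "util m v i y < 0"
    and nonneg: "\<forall>j<m. 0 \<le> y j"
  shows "(\<Sum>j<m. p j * y j) = \<beta>"
proof -
  \<comment> \<open>shrinking \<open>y\<close> by \<open>\<beta> / s\<close> keeps it affordable and would hurt less if \<open>s < \<beta>\<close>\<close>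
  let ?s = "\<Sum>j<m. p j * y j"
  have "?s \<le> \<beta>" using dem by (simp add: demanded_def)
  with \<open>\<beta> < 0\<close> have "?s < 0" by linarith
  define a where "a = \<beta> / ?s"
  have "0 < a" using \<open>?s < 0\<close> \<open>\<beta> < 0\<close> by (simp add: a_def divide_neg_neg)
  have "(\<Sum>j<m. p j * (a * y j)) = a * ?s" by (simp add: sum_distrib_left algebra_simps)
  also have "\<dots> = \<beta>" using \<open>?s < 0\<close> by (simp add: a_def)
  finally have "util m v i (\<lambda>j. a * y j) \<le> util m v i y"
    using dem nonneg \<open>0 < a\<close> by (simp add: demanded_def)
  moreover have "util m v i (\<lambda>j. a * y j) = a * util m v i y"
    by (simp add: util_def sum_distrib_left algebra_simps)
  ultimately have "1 \<le> a" using neg by (simp add: mult_le_cancel_right2)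
  then have "\<beta> \<le> ?s" using \<open>?s < 0\<close> by (simp add: a_def le_divide_eq)
  with \<open>?s \<le> \<beta>\<close> show ?thesis by linarith
qed

lemma demanded_single_chore_bound:
  assumes dem: "demanded m v i p \<beta> y" and "j < m" and "p j < 0" and "\<beta> \<le> 0"
  shows "v i j * (\<beta> / p j) \<le> util m v i y"
proof -
  define x where "x k = (if k = j then \<beta> / p j else 0)" for k
  have "\<forall>k<m. 0 \<le> x k" using assms by (simp add: x_def divide_nonpos_neg)
  moreover have "(\<Sum>k<m. p k * x k) = \<beta>"
    using assms by (simp add: x_def if_distrib[of "(*) _"] cong: if_cong)
  ultimately have "util m v i x \<le> util m v i y" using dem by (simp add: demanded_def)
  moreover have "util m v i x = v i j * (\<beta> / p j)"
    using \<open>j < m\<close> by (simp add: util_def x_def if_distrib[of "(*) _"] cong: if_cong)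
  ultimately show ?thesis by simp
qed

lemma demanded_if_bang_per_buck:
  assumes bound: "\<forall>j<m. v i j \<le> \<alpha> * p j" and "0 \<le> \<alpha>"
    and spend: "(\<Sum>j<m. p j * y j) \<le> \<beta>" and val: "util m v i y = \<alpha> * \<beta>"
  shows "demanded m v i p \<beta> y"
  unfolding demanded_def
proof (intro conjI allI impI spend)
  fix x assume x: "(\<forall>j<m. 0 \<le> x j) \<and> (\<Sum>j<m. p j * x j) \<le> \<beta>"
  have "util m v i x \<le> (\<Sum>j<m. \<alpha> * p j * x j)"
    unfolding util_def by (rule sum_mono) (use bound x in \<open>auto intro: mult_right_mono\<close>)
  also have "\<dots> = \<alpha> * (\<Sum>j<m. p j * x j)" by (simp add: sum_distrib_left mult.assoc)
  also have "\<dots> \<le> \<alpha> * \<beta>" using x \<open>0 \<le> \<alpha>\<close> by (simp add: mult_left_mono)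
  finally show "util m v i x \<le> util m v i y" using val by simp
qed

locale chore_network =
  fixes n m :: nat and v :: "nat \<Rightarrow> nat \<Rightarrow> real" and b u :: "nat \<Rightarrow> real"
begin

abbreviation "q \<equiv> qcap n v u b"
abbreviation "\<tau> \<equiv> tau b u"
abbreviation "V \<equiv> N_vertices n m"
abbreviation "c \<equiv> N_cap n m v u b"
abbreviation "B \<equiv> \<Sum>i<n. \<bar>b i\<bar>"

lemma N_vertices_simps [simp]:
  "Src \<in> V" "Snk \<in> V" "Agt i \<in> V \<longleftrightarrow> i < n" "Chr j \<in> V \<longleftrightarrow> j < m"
  by (auto simp: N_vertices_def)

lemma sum_N_vertices:
  "(\<Sum>x\<in>V. g x) = g Src + g Snk + (\<Sum>i<n. g (Agt i)) + (\<Sum>j<m. g (Chr j))"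
proof -
  have "V = insert Src (insert Snk (Agt ` {..<n} \<union> Chr ` {..<m}))"
    by (auto simp: N_vertices_def)
  moreover have "sum g (Agt ` {..<n} \<union> Chr ` {..<m}) = sum g (Agt ` {..<n}) + sum g (Chr ` {..<m})"
    by (rule sum.union_disjoint) auto
  ultimately show ?thesis by (simp add: sum.reindex inj_on_def image_iff add.assoc)
qed

lemma flow_nonneg: "is_flow V Src Snk c f \<Longrightarrow> x \<in> V \<Longrightarrow> y \<in> V \<Longrightarrow> 0 \<le> f x y"
  unfolding is_flow_def by blast

lemma flow_le_capacity:
  "is_flow V Src Snk c f \<Longrightarrow> x \<in> V \<Longrightarrow> y \<in> V \<Longrightarrow> ereal (f x y) \<le> c x y"
  unfolding is_flow_def by blast

lemma flow_eq_0_if_no_capacity: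
  assumes "is_flow V Src Snk c f" "x \<in> V" "y \<in> V" "c x y = 0"
  shows "f x y = 0"
  using assms unfolding is_flow_def by (metis antisym ereal_less_eq(3) zero_ereal_def)

lemma flow_value_eq:
  assumes "is_flow V Src Snk c f"
  shows "flow_value V Src f = (\<Sum>i<n. f Src (Agt i))"
  unfolding flow_value_def
  by (simp add: sum_N_vertices flow_eq_0_if_no_capacity[OF assms] cong: sum.cong_simp)

lemma flow_value_le:
  assumes "is_flow V Src Snk c f"
  shows "flow_value V Src f \<le> B"
  unfolding flow_value_eq[OF assms]
proof (rule sum_mono)
  fix i assume "i \<in> {..<n}"
  then show "f Src (Agt i) \<le> \<bar>b i\<bar>"
    using flow_le_capacity[OF assms, of Src "Agt i"] by simp
qed

lemma flow_conservation_agent: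
  assumes f: "is_flow V Src Snk c f" and "i < n"
  shows "f Src (Agt i) = (\<Sum>j<m. f (Agt i) (Chr j))"
  using f \<open>i < n\<close> unfolding is_flow_def
  by (auto simp: sum_N_vertices flow_eq_0_if_no_capacity[OF f] cong: sum.cong_simp
           dest!: bspec[of _ _ "Agt i"])

lemma flow_conservation_chore:
  assumes f: "is_flow V Src Snk c f" and "j < m"
  shows "(\<Sum>i<n. f (Agt i) (Chr j)) = f (Chr j) Snk"
  using f \<open>j < m\<close> unfolding is_flow_def
  by (auto simp: sum_N_vertices flow_eq_0_if_no_capacity[OF f] cong: sum.cong_simp
           dest!: bspec[of _ _ "Chr j"])

text \<open>Source and sink edges carry the row and column sums of \<open>F\<close>, so conservation is automatic.\<close>

fun assignment_flow :: "(nat \<Rightarrow> nat \<Rightarrow> real) \<Rightarrow> node \<Rightarrow> node \<Rightarrow> real" where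
  "assignment_flow F Src (Agt i) = (if i < n then \<Sum>j<m. F i j else 0)"
| "assignment_flow F (Agt i) (Chr j) = (if i < n \<and> j < m then F i j else 0)"
| "assignment_flow F (Chr j) Snk = (if j < m then \<Sum>i<n. F i j else 0)"
| "assignment_flow F _ _ = 0"

lemma is_flow_assignment_flow:
  assumes nonneg: "\<forall>i<n. \<forall>j<m. 0 \<le> F i j"
    and agent_cap: "\<forall>i<n. (\<Sum>j<m. F i j) \<le> \<bar>b i\<bar>"
    and chore_cap: "\<forall>j<m. (\<Sum>i<n. F i j) \<le> q j"
    and edges: "\<forall>i<n. \<forall>j<m. 0 < F i j \<longrightarrow> G_edge n \<tau> v i j"
  shows "is_flow V Src Snk c (assignment_flow F)"
  unfolding is_flow_def
proof (intro conjI ballI)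
  fix x y assume "x \<in> V" "y \<in> V"
  then show "0 \<le> assignment_flow F x y"
    using nonneg by (cases x; cases y) (auto intro: sum_nonneg)
  have "F i j = 0" if "i < n" "j < m" "\<not> G_edge n \<tau> v i j" for i j
    using nonneg edges that by force
  then show "ereal (assignment_flow F x y) \<le> c x y"
    using \<open>x \<in> V\<close> \<open>y \<in> V\<close> agent_cap chore_cap by (cases x; cases y) auto
next
  fix x assume "x \<in> V - {Src, Snk}"
  then show "(\<Sum>y\<in>V. assignment_flow F y x) = (\<Sum>y\<in>V. assignment_flow F x y)"
    by (cases x) (auto simp: sum_N_vertices cong: sum.cong_simp)
qed

lemma flow_value_assignment_flow:
  "flow_value V Src (assignment_flow F) = (\<Sum>i<n. \<Sum>j<m. F i j)"
  by (simp add: flow_value_def sum_N_vertices cong: sum.cong_simp)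

end

locale chore_market = chore_network +
  assumes agents: "0 < n" and valuations_neg: "\<forall>i<n. \<forall>j<m. v i j < 0"
    and budgets_neg: "\<forall>i<n. b i < 0" and utilities_neg: "\<forall>i<n. u i < 0"
begin

lemma tau_pos: "i < n \<Longrightarrow> 0 < \<tau> i"
  using budgets_neg utilities_neg by (simp add: tau_def divide_neg_neg)

lemma budget_div_tau: "i < n \<Longrightarrow> b i / \<tau> i = u i"
  using budgets_neg utilities_neg by (force simp: tau_def)

lemma qcap_eq_Min: "q j = Min ((\<lambda>i. \<tau> i * \<bar>v i j\<bar>) ` {..<n})"
proof -
  have "\<bar>b i * v i j / u i\<bar> = \<tau> i * \<bar>v i j\<bar>" if "i < n" for i
    using budgets_neg utilities_neg that by (simp add: tau_def abs_mult abs_divide abs_of_neg)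
  then show ?thesis unfolding qcap_def by (intro arg_cong[where f = Min] image_cong) auto
qed

lemma qcap_le: "i < n \<Longrightarrow> q j \<le> \<tau> i * \<bar>v i j\<bar>"
  unfolding qcap_eq_Min by (rule Min_le) auto

lemma qcap_greatest: "(\<And>i. i < n \<Longrightarrow> a \<le> \<tau> i * \<bar>v i j\<bar>) \<Longrightarrow> a \<le> q j"
  unfolding qcap_eq_Min using agents by (subst Min_ge_iff) auto

lemma qcap_pos:
  assumes "j < m"
  shows "0 < q j"
proof -
  have "0 < \<tau> i * \<bar>v i j\<bar>" if "i < n" for i
    using tau_pos[OF that] valuations_neg[rule_format, OF that assms] by (simp add: mult_pos_neg)
  then show ?thesis unfolding qcap_eq_Min using agents by (subst Min_gr_iff) auto
qed

lemma G_edge_iff_qcap: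
  assumes "i < n"
  shows "G_edge n \<tau> v i j \<longleftrightarrow> \<tau> i * \<bar>v i j\<bar> = q j"
proof
  assume "G_edge n \<tau> v i j"
  then have "\<tau> i * \<bar>v i j\<bar> \<le> q j" by (intro qcap_greatest) (simp add: G_edge_def)
  then show "\<tau> i * \<bar>v i j\<bar> = q j" using qcap_le[OF assms, of j] by linarith
qed (use qcap_le in \<open>simp add: G_edge_def\<close>)

lemma valuation_le_qcap:
  assumes "i < n" "j < m"
  shows "v i j \<le> - q j / \<tau> i"
proof -
  have "q j \<le> \<tau> i * - v i j" using qcap_le[OF assms(1), of j] valuations_neg assms by (simp add: abs_of_neg)
  then show ?thesis using tau_pos[OF assms(1)] by (simp add: field_simps)
qed

lemma valuation_eq_qcap:
  assumes "i < n" "j < m" "G_edge n \<tau> v i j"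
  shows "v i j = - q j / \<tau> i"
proof -
  have "q j = \<tau> i * - v i j" using G_edge_iff_qcap assms valuations_neg by (simp add: abs_of_neg)
  then show ?thesis using tau_pos[OF assms(1)] by (simp add: field_simps)
qed

text \<open>The allocations that are competitive at prices \<open>-q\<close>: budgets are spent exactly, and only
  on chores of minimal pain per buck, i.e. along edges of \<open>G\<^sub>\<tau>(v)\<close>.\<close>

definition mbb_allocation :: "(nat \<Rightarrow> nat \<Rightarrow> real) \<Rightarrow> bool" where
  "mbb_allocation z \<longleftrightarrow> is_allocation n m z \<and> (\<forall>i<n. (\<Sum>j<m. q j * z i j) = \<bar>b i\<bar>) \<and>
     (\<forall>i<n. \<forall>j<m. 0 < z i j \<longrightarrow> G_edge n \<tau> v i j)"

lemma competitive_price_bound: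
  assumes dem: "demanded m v i p (b i) y" and val: "util m v i y = u i"
    and "i < n" "j < m" "p j < 0"
  shows "- p j \<le> \<tau> i * \<bar>v i j\<bar>"
proof -
  have "v i j * b i / p j \<le> u i"
    using demanded_single_chore_bound[OF dem \<open>j < m\<close> \<open>p j < 0\<close>] budgets_neg val \<open>i < n\<close> by auto
  then have "u i * p j \<le> v i j * b i" using \<open>p j < 0\<close> by (simp add: neg_divide_le_eq)
  then have "b i * v i j / u i \<le> p j"
    using utilities_neg \<open>i < n\<close> by (simp add: neg_divide_le_eq mult.commute)
  then show ?thesis
    using valuations_neg \<open>i < n\<close> \<open>j < m\<close> by (simp add: tau_def abs_of_neg)
qed

lemma mbb_allocation_if_competitive:
  assumes comp: "competitive_allocation n m v b z" and val: "\<forall>i<n. util m v i (z i) = u i"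
  shows "mbb_allocation z"
proof -
  obtain p where alloc: "is_allocation n m z" and p_neg: "\<forall>j<m. p j < 0"
    and dem: "\<forall>i<n. demanded m v i p (b i) (z i)"
    using comp unfolding competitive_allocation_iff_demanded by blast
  have z_nonneg: "0 \<le> z i j" if "i < n" "j < m" for i j
    using alloc that by (simp add: is_allocation_def)
  have spend: "(\<Sum>j<m. p j * z i j) = b i" if "i < n" for i
    by (rule demanded_spends_budget) (use dem budgets_neg utilities_neg val z_nonneg that in auto)
  have price_bound: "- p j \<le> \<tau> i * \<bar>v i j\<bar>" if "i < n" "j < m" for i j
    by (rule competitive_price_bound) (use dem val p_neg that in auto)
  have v_le: "v i j * z i j \<le> p j / \<tau> i * z i j" if "i < n" "j < m" for i j
  proof (rule mult_right_mono)
    show "v i j \<le> p j / \<tau> i"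
      using price_bound[OF that] tau_pos[OF that(1)] valuations_neg that
      by (simp add: abs_of_neg le_divide_eq algebra_simps)
  qed (use z_nonneg that in simp)
  have v_eq: "v i j * z i j = p j / \<tau> i * z i j" if "i < n" "j < m" for i j
  proof (rule sum_mono_inv[of "\<lambda>j. v i j * z i j" "{..<m}" "\<lambda>j. p j / \<tau> i * z i j"])
    have "(\<Sum>j<m. v i j * z i j) = b i / \<tau> i"
      using val budget_div_tau that by (simp add: util_def)
    also have "\<dots> = (\<Sum>j<m. p j / \<tau> i * z i j)"
      using spend[OF that(1)] by (simp add: sum_divide_distrib[symmetric])
    finally show "(\<Sum>j<m. v i j * z i j) = (\<Sum>j<m. p j / \<tau> i * z i j)" .
  qed (use v_le that in auto)
  have tight: "\<tau> i * \<bar>v i j\<bar> = q j \<and> q j = - p j" if "i < n" "j < m" "0 < z i j" for i j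
  proof -
    have "v i j = p j / \<tau> i" using v_eq[OF that(1,2)] that(3) by (metis mult_right_cancel less_irrefl)
    then have "\<tau> i * \<bar>v i j\<bar> = - p j"
      using tau_pos[OF that(1)] p_neg that(2) by (simp add: abs_of_neg)
    moreover have "- p j \<le> q j" using qcap_greatest price_bound that(2) by blast
    ultimately show ?thesis using qcap_le[OF that(1), of j] by linarith
  qed
  have "(\<Sum>j<m. q j * z i j) = \<bar>b i\<bar>" if "i < n" for i
  proof -
    have "(\<Sum>j<m. q j * z i j) = - (\<Sum>j<m. p j * z i j)"
      unfolding sum_negf[symmetric]
    proof (rule sum.cong)
      fix j assume "j \<in> {..<m}"
      then consider "z i j = 0" | "0 < z i j" using z_nonneg \<open>i < n\<close> by fastforce
      then show "q j * z i j = - (p j * z i j)"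
        using tight \<open>i < n\<close> \<open>j \<in> {..<m}\<close> by cases auto
    qed simp
    with spend[OF that] budgets_neg that show ?thesis by (simp add: abs_of_neg)
  qed
  with alloc tight G_edge_iff_qcap show ?thesis by (simp add: mbb_allocation_def)
qed

lemma competitive_if_mbb_allocation:
  assumes "mbb_allocation z"
  shows "competitive_allocation n m v b z \<and> (\<forall>i<n. util m v i (z i) = u i)"
proof -
  have alloc: "is_allocation n m z" and spend: "\<forall>i<n. (\<Sum>j<m. q j * z i j) = \<bar>b i\<bar>"
    and edges: "\<forall>i<n. \<forall>j<m. 0 < z i j \<longrightarrow> G_edge n \<tau> v i j"
    using assms by (simp_all add: mbb_allocation_def)
  have spend_neg: "(\<Sum>j<m. - q j * z i j) = b i" if "i < n" for i
    using spend budgets_neg that by (simp add: sum_negf abs_of_neg)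
  have val: "util m v i (z i) = u i" if "i < n" for i
  proof -
    have "util m v i (z i) = (\<Sum>j<m. - q j * z i j) / \<tau> i"
      unfolding util_def sum_divide_distrib
    proof (rule sum.cong)
      fix j assume "j \<in> {..<m}"
      then consider "z i j = 0" | "G_edge n \<tau> v i j"
        using alloc edges \<open>i < n\<close> by (fastforce simp: is_allocation_def)
      then show "v i j * z i j = - q j * z i j / \<tau> i"
        using valuation_eq_qcap \<open>i < n\<close> \<open>j \<in> {..<m}\<close> by cases simp_all
    qed simp
    then show ?thesis using spend_neg budget_div_tau that by simp
  qed
  have "demanded m v i (\<lambda>j. - q j) (b i) (z i)" if "i < n" for i
  proof (rule demanded_if_bang_per_buck[where \<alpha> = "1 / \<tau> i"])
    show "\<forall>j<m. v i j \<le> 1 / \<tau> i * - q j" using valuation_le_qcap that by simp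
    show "util m v i (z i) = 1 / \<tau> i * b i" using val budget_div_tau that by simp
  qed (use tau_pos[OF that] spend_neg[OF that] in auto)
  with alloc qcap_pos val show ?thesis
    unfolding competitive_allocation_iff_demanded by (metis neg_less_0_iff_less)
qed

lemma mbb_allocation_of_full_flow:
  assumes total: "B = (\<Sum>j<m. q j)" and f: "is_flow V Src Snk c f" and val: "flow_value V Src f = B"
  shows "mbb_allocation (\<lambda>i j. f (Agt i) (Chr j) / q j)"
proof -
  define F where "F i j = f (Agt i) (Chr j)" for i j
  have F_nonneg: "0 \<le> F i j" if "i < n" "j < m" for i j
    using flow_nonneg[OF f] that by (simp add: F_def)
  have agent_out: "(\<Sum>j<m. F i j) = \<bar>b i\<bar>" if "i < n" for i
  proof -
    have "f Src (Agt i) = \<bar>b i\<bar>"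
    proof (rule sum_mono_inv[of "\<lambda>i. f Src (Agt i)" "{..<n}"])
      show "(\<Sum>i<n. f Src (Agt i)) = B" using val flow_value_eq[OF f] by simp
      show "f Src (Agt k) \<le> \<bar>b k\<bar>" if "k \<in> {..<n}" for k
        using flow_le_capacity[OF f, of Src "Agt k"] that by simp
    qed (use that in auto)
    then show ?thesis using flow_conservation_agent[OF f that] by (simp add: F_def)
  qed
  have chore_in: "(\<Sum>i<n. F i j) = q j" if "j < m" for j
  proof -
    have "(\<Sum>j<m. f (Chr j) Snk) = (\<Sum>j<m. \<Sum>i<n. F i j)"
      using flow_conservation_chore[OF f] by (simp add: F_def)
    also have "\<dots> = B" using agent_out by (subst sum.swap) simp
    finally have "f (Chr j) Snk = q j"
    proof (rule sum_mono_inv[of "\<lambda>j. f (Chr j) Snk" "{..<m}" q j, OF trans])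
      show "f (Chr k) Snk \<le> q k" if "k \<in> {..<m}" for k
        using flow_le_capacity[OF f, of "Chr k" Snk] that by simp
    qed (use total that in auto)
    then show ?thesis using flow_conservation_chore[OF f that] by (simp add: F_def)
  qed
  have edge: "G_edge n \<tau> v i j" if "i < n" "j < m" "0 < F i j" for i j
  proof (rule ccontr)
    assume "\<not> G_edge n \<tau> v i j"
    then have "F i j = 0" using flow_eq_0_if_no_capacity[OF f, of "Agt i" "Chr j"] that by (simp add: F_def)
    with \<open>0 < F i j\<close> show False by simp
  qed
  have "(\<Sum>i<n. F i j / q j) = 1" if "j < m" for j
    using chore_in[OF that] qcap_pos[OF that] by (simp add: sum_divide_distrib[symmetric])
  moreover have "(\<Sum>j<m. q j * (F i j / q j)) = \<bar>b i\<bar>" if "i < n" for i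
    using agent_out[OF that] by (simp add: qcap_pos[THEN less_imp_not_eq2] cong: sum.cong_simp)
  moreover have "0 \<le> F i j / q j" if "i < n" "j < m" for i j
    using F_nonneg[OF that] qcap_pos[OF that(2)] by simp
  moreover have "G_edge n \<tau> v i j" if "i < n" "j < m" "0 < F i j / q j" for i j
    using edge[OF that(1,2)] that(3) qcap_pos[OF that(2)] by (simp add: zero_less_divide_iff)
  ultimately show ?thesis by (simp add: mbb_allocation_def is_allocation_def F_def)
qed

lemma full_flow_of_mbb_allocation:
  assumes "mbb_allocation z"
  defines "f \<equiv> assignment_flow (\<lambda>i j. q j * z i j)"
  shows "B = (\<Sum>j<m. q j) \<and> is_flow V Src Snk c f \<and> flow_value V Src f = B"
proof -
  have alloc: "is_allocation n m z" and spend: "\<forall>i<n. (\<Sum>j<m. q j * z i j) = \<bar>b i\<bar>"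
    and edges: "\<forall>i<n. \<forall>j<m. 0 < z i j \<longrightarrow> G_edge n \<tau> v i j"
    using assms by (simp_all add: mbb_allocation_def)
  have chore_in: "(\<Sum>i<n. q j * z i j) = q j" if "j < m" for j
    using alloc that by (simp add: is_allocation_def sum_distrib_left[symmetric])
  have "(\<Sum>j<m. q j) = (\<Sum>i<n. \<Sum>j<m. q j * z i j)"
    using chore_in by (subst sum.swap) simp
  moreover have "is_flow V Src Snk c f"
    unfolding f_def
  proof (rule is_flow_assignment_flow)
    show "\<forall>i<n. \<forall>j<m. 0 \<le> q j * z i j"
      using alloc qcap_pos by (simp add: is_allocation_def less_imp_le)
    show "\<forall>i<n. \<forall>j<m. 0 < q j * z i j \<longrightarrow> G_edge n \<tau> v i j"
      using edges qcap_pos by (auto simp: zero_less_mult_iff dest: less_asym)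
  qed (use spend chore_in in simp_all)
  ultimately show ?thesis
    using spend by (simp add: f_def flow_value_assignment_flow)
qed

lemma competitive_iff_mbb_allocation:
  "competitive_allocation n m v b z \<and> (\<forall>i<n. util m v i (z i) = u i) \<longleftrightarrow> mbb_allocation z"
  using mbb_allocation_if_competitive competitive_if_mbb_allocation by blast

lemma competitive_profile_iff_max_flow:
  "competitive_profile n m v b u \<longleftrightarrow> B = (\<Sum>j<m. q j) \<and> is_max_flow_value V Src Snk c B"
proof
  assume "competitive_profile n m v b u"
  then obtain z where "mbb_allocation z"
    using competitive_iff_mbb_allocation unfolding competitive_profile_def by fastforce
  then show "B = (\<Sum>j<m. q j) \<and> is_max_flow_value V Src Snk c B"
    using full_flow_of_mbb_allocation flow_value_le unfolding is_max_flow_value_def by blast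
next
  assume "B = (\<Sum>j<m. q j) \<and> is_max_flow_value V Src Snk c B"
  then obtain f where "mbb_allocation (\<lambda>i j. f (Agt i) (Chr j) / q j)"
    using mbb_allocation_of_full_flow unfolding is_max_flow_value_def by blast
  then show "competitive_profile n m v b u"
    using competitive_iff_mbb_allocation unfolding competitive_profile_def by fastforce
qed

end

theorem proposition5:
  fixes n m :: nat
    and v :: "nat \<Rightarrow> nat \<Rightarrow> real"
    and b u :: "nat \<Rightarrow> real"
  assumes "0 < n"
    and "\<forall>i<n. \<forall>j<m. v i j < 0"
    and "\<forall>i<n. b i < 0"
    and "\<forall>i<n. u i < 0"
  shows "(competitive_profile n m v b u \<longleftrightarrow>
           (\<Sum>i<n. \<bar>b i\<bar>) = (\<Sum>j<m. qcap n v u b j) \<and>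
           is_max_flow_value (N_vertices n m) Src Snk (N_cap n m v u b) (\<Sum>i<n. \<bar>b i\<bar>)) \<and>
         (\<forall>f. (\<Sum>i<n. \<bar>b i\<bar>) = (\<Sum>j<m. qcap n v u b j) \<and>
             is_flow (N_vertices n m) Src Snk (N_cap n m v u b) f \<and>
             flow_value (N_vertices n m) Src f = (\<Sum>i<n. \<bar>b i\<bar>) \<longrightarrow>
             (let z = (\<lambda>i j. f (Agt i) (Chr j) / qcap n v u b j) in
                competitive_allocation n m v b z \<and> (\<forall>i<n. util m v i (z i) = u i))) \<and>
         (\<forall>z. competitive_allocation n m v b z \<and> (\<forall>i<n. util m v i (z i) = u i) \<longrightarrow>
             (\<exists>f. is_flow (N_vertices n m) Src Snk (N_cap n m v u b) f \<and>
                  flow_value (N_vertices n m) Src f = (\<Sum>i<n. \<bar>b i\<bar>) \<and>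
                  (\<forall>i<n. \<forall>j<m. f (Agt i) (Chr j) = qcap n v u b j * z i j)))"
proof -
  interpret chore_market n m v b u
    using assms by unfold_locales
  show ?thesis
  proof (intro conjI allI impI competitive_profile_iff_max_flow)
    fix f
    assume "B = (\<Sum>j<m. q j) \<and> is_flow V Src Snk c f \<and> flow_value V Src f = B"
    then show "let z = (\<lambda>i j. f (Agt i) (Chr j) / q j) in
                 competitive_allocation n m v b z \<and> (\<forall>i<n. util m v i (z i) = u i)"
      unfolding Let_def using mbb_allocation_of_full_flow competitive_if_mbb_allocation by blast
  next
    fix z
    assume "competitive_allocation n m v b z \<and> (\<forall>i<n. util m v i (z i) = u i)"
    then have "mbb_allocation z" by (simp add: competitive_iff_mbb_allocation)
    then show "\<exists>f. is_flow V Src Snk c f \<and> flow_value V Src f = B \<and>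
                 (\<forall>i<n. \<forall>j<m. f (Agt i) (Chr j) = q j * z i j)"
      using full_flow_of_mbb_allocation by (intro exI[of _ "assignment_flow (\<lambda>i j. q j * z i j)"]) auto
  qed
qed

end
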